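(* For an integer $n>1$ define, for every integer $1<r<n$, $$E^{PD,P}_n(r)=\sum_{k=r+1}^{n}\left(1+\frac{k}{n}\right)\frac{r}{(k-1)k}\frac{\binom{k}{2}}{\binom{n}{2}}=\frac{r(n-r)(3n+1+r)}{2n^2(n-1)},$$ and let $\mathcal{M}(n)$ be a value of $r$ at which $E^{PD,P}_n$ attains its maximum. Then (i) $\lim_{n\to\infty}\mathcal{M}(n)/n=\dfrac{\sqrt{13}-2}{3}=0.53518\dots$; (ii) $\lim_{n\to\infty}E^{PD,P}_n(\mathcal{M}(n))=\dfrac{13\sqrt{13}-35}{27}=0.4397\dots$.
   Context: $E^{PD,P}_n(r)$ is the expected payoff, in the Postdoc secretary problem (goal: select the overall second best of $n$ randomly ordered candidates) with payoff $1+k/n$ when the accepted $k$-th candidate is the overall second best, of the strategy that rejects the first $r$ candidates and then accepts the first candidate which is second best among those seen so far. *)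

theory Defs
  imports Complex_Main
begin

definition E_PDP :: "nat \<Rightarrow> nat \<Rightarrow> real" where
  "E_PDP n r = (\<Sum>k = r + 1..n. (1 + real k / real n) * (real r / (real (k - 1) * real k))
                 * (real (k choose 2) / real (n choose 2)))"

end

theory Submission
  imports Defs "HOL-Real_Asymp.Real_Asymp"
begin

text \<open>Summing the summands, which are linear in \<open>k\<close>, gives the stated cubic, and this
  differs from \<open>p (r/n)\<close>, where \<open>p x = x (1 - x) (3 + x) / 2\<close>, by at most \<open>1/n\<close>.
  On \<open>[0, \<infinity>)\<close> the profile \<open>p\<close> is maximal at the root \<open>a = (\<surd>13 - 2)/3\<close> of
  \<open>3 - 4x - 3x\<^sup>2\<close>, with \<open>p a - p x = (x - a)\<^sup>2 (x + 2 + 2a) / 2 \<ge> (x - a)\<^sup>2\<close>.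
  Comparing the maximiser \<open>M n\<close> with the cutoff \<open>\<lfloor>a n\<rfloor>\<close> squeezes \<open>p (M n / n)\<close>
  to \<open>p a\<close>, so \<open>M n / n \<longrightarrow> a\<close> and \<open>E(M n) \<longrightarrow> p a\<close>.\<close>

lemma real_choose_two: "real (k choose 2) = real k * (real k - 1) / 2"
proof -
  have "even (k * (k - 1))" by (cases k) auto
  then have "2 * real (k choose 2) = real k * real (k - 1)"
    by (metis choose_two dvd_mult_div_cancel of_nat_mult of_nat_numeral)
  then show ?thesis by (cases k) auto
qed

lemma E_PDP_summand:
  assumes "2 \<le> k" "2 \<le> n"
  shows "(1 + real k / real n) * (real r / (real (k - 1) * real k)) * (real (k choose 2) / real (n choose 2))
       = real r * (real n + real k) / ((real n)\<^sup>2 * (real n - 1))"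
proof -
  have "real (k - 1) = real k - 1" using assms by simp
  moreover have "(real k - 1) * real k \<noteq> 0" "real n * (real n - 1) \<noteq> 0" "real n \<noteq> 0"
    using assms by auto
  ultimately show ?thesis
    by (simp add: real_choose_two divide_simps) (simp add: algebra_simps power2_eq_square)
qed

lemma sum_add_of_nat_atLeastAtMost:
  "(\<Sum>k = r + 1..r + d. c + real k) = real d * (2 * c + 2 * real r + real d + 1) / 2"
  by (induction d) (auto simp: algebra_simps add_divide_distrib)

lemma E_PDP_closed_form:
  assumes "1 < r" "r < n"
  shows "E_PDP n r = real r * real (n - r) * (3 * real n + 1 + real r) / (2 * (real n)\<^sup>2 * (real n - 1))"
proof -
  have "E_PDP n r = (\<Sum>k = r + 1..n. real r / ((real n)\<^sup>2 * (real n - 1)) * (real n + real k))"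
    unfolding E_PDP_def using assms by (intro sum.cong refl) (subst E_PDP_summand, auto)
  also have "\<dots> = real r / ((real n)\<^sup>2 * (real n - 1)) * (\<Sum>k = r + 1..r + (n - r). real n + real k)"
    using assms by (simp add: sum_distrib_left)
  also have "\<dots> = real r / ((real n)\<^sup>2 * (real n - 1)) * (real (n - r) * (3 * real n + 1 + real r) / 2)"
    unfolding sum_add_of_nat_atLeastAtMost using assms by (simp add: of_nat_diff algebra_simps)
  finally show ?thesis by (simp add: ac_simps)
qed

definition payoff_profile :: "real \<Rightarrow> real" where
  "payoff_profile x = x * (1 - x) * (3 + x) / 2"

lemma isCont_payoff_profile: "isCont payoff_profile x"
  unfolding payoff_profile_def by (intro continuous_intros) simp

lemma E_PDP_payoff_profile_bounds:
  assumes "1 < r" "r < n"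
  shows "payoff_profile (real r / real n) \<le> E_PDP n r"
    and "E_PDP n r \<le> payoff_profile (real r / real n) + 1 / real n"
proof -
  define x where "x = real r / real n"
  have N: "3 \<le> real n" using assms by simp
  have x: "0 \<le> x" "x \<le> 1" using assms by (auto simp: x_def)
  have E: "E_PDP n r = payoff_profile x + x * (1 - x) * (4 + x) / (2 * (real n - 1))"
    using assms unfolding E_PDP_closed_form[OF assms] payoff_profile_def x_def
    by (simp add: of_nat_diff field_simps power2_eq_square)
  have "x * (1 - x) \<le> 1 / 4"
    using zero_le_power2[of "x - 1/2"] by (simp add: power2_eq_square algebra_simps)
  then have "x * (1 - x) * (4 + x) \<le> 1 / 4 * 5"
    using x by (intro mult_mono) auto
  then have "x * (1 - x) * (4 + x) / (2 * (real n - 1)) \<le> (5 / 4) / (2 * (real n - 1))"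
    using N by (intro divide_right_mono) auto
  also have "\<dots> \<le> 1 / real n"
    using N by (simp add: field_simps)
  finally have "x * (1 - x) * (4 + x) / (2 * (real n - 1)) \<le> 1 / real n" .
  moreover have "0 \<le> x * (1 - x) * (4 + x) / (2 * (real n - 1))"
    using x N by simp
  ultimately show "payoff_profile x \<le> E_PDP n r" "E_PDP n r \<le> payoff_profile x + 1 / real n"
    unfolding E by simp_all
qed

definition opt_ratio :: real where
  "opt_ratio = (sqrt 13 - 2) / 3"

lemma opt_ratio_root: "3 * opt_ratio\<^sup>2 + 4 * opt_ratio - 3 = 0"
  unfolding opt_ratio_def by (simp add: power2_eq_square algebra_simps add_divide_distrib diff_divide_distrib)

lemma opt_ratio_bounds: "1 / 2 < opt_ratio" "opt_ratio < 1"
proof -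
  have "sqrt ((7/2)\<^sup>2) < sqrt 13" "sqrt 13 < sqrt (5\<^sup>2)"
    by (simp_all only: real_sqrt_less_iff) (simp_all add: power2_eq_square)
  then show "1 / 2 < opt_ratio" "opt_ratio < 1"
    unfolding opt_ratio_def by simp_all
qed

lemma payoff_profile_gap:
  "payoff_profile opt_ratio - payoff_profile x = (x - opt_ratio)\<^sup>2 * (x + 2 + 2 * opt_ratio) / 2"
proof -
  have "payoff_profile opt_ratio - payoff_profile x - (x - opt_ratio)\<^sup>2 * (x + 2 + 2 * opt_ratio) / 2
      = (x - opt_ratio) * (3 * opt_ratio\<^sup>2 + 4 * opt_ratio - 3) / 2"
    unfolding payoff_profile_def by (simp add: power2_eq_square field_simps)
  then show ?thesis using opt_ratio_root by simp
qed

lemma sq_dist_opt_ratio_le_payoff_profile_gap: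
  assumes "0 \<le> x"
  shows "(x - opt_ratio)\<^sup>2 \<le> payoff_profile opt_ratio - payoff_profile x"
proof -
  have "(x - opt_ratio)\<^sup>2 * 2 \<le> (x - opt_ratio)\<^sup>2 * (x + 2 + 2 * opt_ratio)"
    using assms opt_ratio_bounds by (intro mult_left_mono) auto
  then show ?thesis unfolding payoff_profile_gap by simp
qed

lemma payoff_profile_le_opt_ratio:
  assumes "0 \<le> x"
  shows "payoff_profile x \<le> payoff_profile opt_ratio"
  using sq_dist_opt_ratio_le_payoff_profile_gap[OF assms] zero_le_power2[of "x - opt_ratio"] by linarith

lemma payoff_profile_opt_ratio: "payoff_profile opt_ratio = (13 * sqrt 13 - 35) / 27"
proof -
  have s: "sqrt 13 * sqrt 13 = 13" by simp
  have "payoff_profile opt_ratio = opt_ratio\<^sup>2 + opt_ratio ^ 3 - opt_ratio * (3 * opt_ratio\<^sup>2 + 4 * opt_ratio - 3) / 2"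
    unfolding payoff_profile_def by (simp add: power2_eq_square power3_eq_cube field_simps)
  also have "\<dots> = opt_ratio\<^sup>2 + opt_ratio ^ 3" by (simp add: opt_ratio_root)
  also have "\<dots> = (13 * sqrt 13 - 35) / 27"
    unfolding opt_ratio_def by (simp add: power2_eq_square power3_eq_cube field_simps s)
  finally show ?thesis .
qed

lemma tendsto_floor_mult_div:
  fixes a :: real
  assumes "0 \<le> a"
  shows "(\<lambda>n. real (nat \<lfloor>a * real n\<rfloor>) / real n) \<longlonglongrightarrow> a"
proof (rule tendsto_sandwich[of "\<lambda>n. a - 1 / real n" _ _ "\<lambda>n. a"])
  have fl: "real (nat \<lfloor>a * real n\<rfloor>) = real_of_int \<lfloor>a * real n\<rfloor>" for n
    using assms by simp
  show "\<forall>\<^sub>F n in sequentially. a - 1 / real n \<le> real (nat \<lfloor>a * real n\<rfloor>) / real n"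
    using eventually_gt_at_top[of 0]
  proof eventually_elim
    case (elim n)
    then have "a - 1 / real n = (a * real n - 1) / real n"
      by (simp add: field_simps)
    also have "\<dots> \<le> real (nat \<lfloor>a * real n\<rfloor>) / real n"
      using real_of_int_floor_gt_diff_one[of "a * real n"] by (intro divide_right_mono) (simp_all add: fl)
    finally show ?case .
  qed
  show "\<forall>\<^sub>F n in sequentially. real (nat \<lfloor>a * real n\<rfloor>) / real n \<le> a"
    using eventually_gt_at_top[of 0]
  proof eventually_elim
    case (elim n)
    then show ?case using of_int_floor_le[of "a * real n"] by (simp add: fl field_simps)
  qed
qed (real_asymp, simp)

context
  fixes M :: "nat \<Rightarrow> nat"
  assumes argmax: "\<And>n. n \<ge> 3 \<Longrightarrow> 1 < M n \<and> M n < n \<and>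
                     (\<forall>r. 1 < r \<and> r < n \<longrightarrow> E_PDP n r \<le> E_PDP n (M n))"
begin

lemma payoff_profile_argmax_tendsto:
  "(\<lambda>n. payoff_profile (real (M n) / real n)) \<longlonglongrightarrow> payoff_profile opt_ratio"
proof -
  define c where "c n = nat \<lfloor>opt_ratio * real n\<rfloor>" for n
  have c_tendsto: "(\<lambda>n. payoff_profile (real (c n) / real n) - 1 / real n) \<longlonglongrightarrow> payoff_profile opt_ratio"
  proof -
    have "(\<lambda>n. real (c n) / real n) \<longlonglongrightarrow> opt_ratio"
      unfolding c_def using opt_ratio_bounds by (intro tendsto_floor_mult_div) simp
    then have "(\<lambda>n. payoff_profile (real (c n) / real n)) \<longlonglongrightarrow> payoff_profile opt_ratio"
      by (rule isCont_tendsto_compose[OF isCont_payoff_profile])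
    moreover have "(\<lambda>n. 1 / real n) \<longlonglongrightarrow> 0" by real_asymp
    ultimately show ?thesis using tendsto_diff by fastforce
  qed
  have "payoff_profile (real (c n) / real n) - 1 / real n \<le> payoff_profile (real (M n) / real n)"
    if "4 \<le> n" for n
  proof -
    have "opt_ratio * 4 \<le> opt_ratio * real n"
      using that opt_ratio_bounds by (intro mult_left_mono) auto
    moreover have "opt_ratio * real n < real n"
      using that opt_ratio_bounds by simp
    ultimately have "2 < opt_ratio * real n" "opt_ratio * real n < real n"
      using opt_ratio_bounds by linarith+
    then have "1 < c n" "c n < n"
      unfolding c_def by linarith+
    with that argmax[of n] E_PDP_payoff_profile_bounds[of "c n" n] E_PDP_payoff_profile_bounds[of "M n" n]
    show ?thesis by force
  qed
  moreover have "payoff_profile (real (M n) / real n) \<le> payoff_profile opt_ratio" for n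
    by (rule payoff_profile_le_opt_ratio) simp
  ultimately show ?thesis
    by (intro tendsto_sandwich[OF _ _ c_tendsto tendsto_const]) (auto intro: eventually_sequentiallyI)
qed

lemma argmax_ratio_tendsto: "(\<lambda>n. real (M n) / real n) \<longlonglongrightarrow> opt_ratio"
proof -
  let ?x = "\<lambda>n. real (M n) / real n"
  have "(\<lambda>n. payoff_profile opt_ratio - payoff_profile (?x n)) \<longlonglongrightarrow> 0"
    using tendsto_diff[OF tendsto_const[of "payoff_profile opt_ratio"] payoff_profile_argmax_tendsto] by simp
  then have "(\<lambda>n. (?x n - opt_ratio)\<^sup>2) \<longlonglongrightarrow> 0"
    by (rule tendsto_sandwich[rotated 2, OF tendsto_const])
      (simp_all add: sq_dist_opt_ratio_le_payoff_profile_gap)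
  then have "(\<lambda>n. \<bar>?x n - opt_ratio\<bar>) \<longlonglongrightarrow> 0"
    using tendsto_real_sqrt by fastforce
  then show ?thesis by (simp add: tendsto_rabs_zero_iff LIM_zero_iff)
qed

lemma E_PDP_argmax_tendsto: "(\<lambda>n. E_PDP n (M n)) \<longlonglongrightarrow> payoff_profile opt_ratio"
proof (rule tendsto_sandwich)
  show "\<forall>\<^sub>F n in sequentially. payoff_profile (real (M n) / real n) \<le> E_PDP n (M n)"
    "\<forall>\<^sub>F n in sequentially. E_PDP n (M n) \<le> payoff_profile (real (M n) / real n) + 1 / real n"
    using argmax E_PDP_payoff_profile_bounds by (auto intro!: eventually_sequentiallyI[of 3])
  have "(\<lambda>n. 1 / real n) \<longlonglongrightarrow> 0" by real_asymp
  from tendsto_add[OF payoff_profile_argmax_tendsto this]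
  show "(\<lambda>n. payoff_profile (real (M n) / real n) + 1 / real n) \<longlonglongrightarrow> payoff_profile opt_ratio"
    by simp
qed (rule payoff_profile_argmax_tendsto)

end

theorem theorem10:
  fixes M :: "nat \<Rightarrow> nat"
  assumes argmax: "\<And>n. n \<ge> 3 \<Longrightarrow> 1 < M n \<and> M n < n \<and>
                     (\<forall>r. 1 < r \<and> r < n \<longrightarrow> E_PDP n r \<le> E_PDP n (M n))"
  shows "(\<forall>n r. 1 < n \<and> 1 < r \<and> r < n \<longrightarrow>
            E_PDP n r = real r * real (n - r) * (3 * real n + 1 + real r) / (2 * (real n)^2 * (real n - 1)))
       \<and> (\<lambda>n. real (M n) / real n) \<longlonglongrightarrow> (sqrt 13 - 2) / 3
       \<and> (\<lambda>n. E_PDP n (M n)) \<longlonglongrightarrow> (13 * sqrt 13 - 35) / 27"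
proof -
  have "(\<lambda>n. real (M n) / real n) \<longlonglongrightarrow> (sqrt 13 - 2) / 3"
    using argmax by (rule argmax_ratio_tendsto[unfolded opt_ratio_def])
  moreover have "(\<lambda>n. E_PDP n (M n)) \<longlonglongrightarrow> (13 * sqrt 13 - 35) / 27"
    using argmax by (rule E_PDP_argmax_tendsto[unfolded payoff_profile_opt_ratio])
  ultimately show ?thesis
    using E_PDP_closed_form by blast
qed

end
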